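(* For any diagonal section $\delta$, $$\mu_\delta=\max_{x\in[0,1]}\ \min_{t\in[x,g^\delta_U(x)]}\widehat{\delta}(t).$$
   Context: $\mathbb{I}=[0,1]$. A (bivariate) copula is a function $C\colon\mathbb{I}^2\to\mathbb{I}$ with $C(x,0)=C(0,y)=0$, $C(x,1)=x$, $C(1,y)=y$, and $C(b,d)+C(a,c)-C(b,c)-C(a,d)\ge 0$ for all $a\le b$, $c\le d$. A diagonal section is $\delta\colon\mathbb{I}\to\mathbb{I}$ with $\delta(x)\le x$, $0\le\delta(y)-\delta(x)\le 2(y-x)$ for $x\le y$, $\delta(1)=1$; $\widehat{\delta}(x)=x-\delta(x)$. The asymmetry of a copula $C$ is $\mu(C)=\max_{x,y\in\mathbb{I}}|C(x,y)-C(y,x)|$, and $\mu_\delta=\sup\{\mu(C): C\text{ copula with } C(t,t)=\delta(t)\ \forall t\}$. For $x\le y$ let $\mathrm{TV}_x^y(\widehat{\delta})$ be the total variation of $\widehat{\delta}$ on $[x,y]$, and for $y<x$ set $\mathrm{TV}_x^y=-\mathrm{TV}_y^x$. Let $f^\delta(x,y)=y-\frac12(\widehat{\delta}(x)+\widehat{\delta}(y)+\mathrm{TV}_x^y(\widehat{\delta}))$, $D_f^\circ(\delta)=\{(x,y)\in\mathbb{I}^2: f^\delta(x,y)<\min\{x,y\}\}$, $D_f(\delta)=\overline{D_f^\circ(\delta)}\cup\{(x,x):x\in\mathbb{I}\}$, and $g^\delta_U(x)=\max\{y\in\mathbb{I}:(x,y)\in D_f(\delta)\}$. *)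

theory Defs
  imports "HOL-Analysis.Analysis"
begin

definition is_copula :: "(real \<Rightarrow> real \<Rightarrow> real) \<Rightarrow> bool" where
  "is_copula C \<longleftrightarrow>
     (\<forall>x\<in>{0..1}. \<forall>y\<in>{0..1}. C x y \<in> {0..1}) \<and>
     (\<forall>x\<in>{0..1}. C x 0 = 0 \<and> C 0 x = 0 \<and> C x 1 = x \<and> C 1 x = x) \<and>
     (\<forall>a\<in>{0..1}. \<forall>b\<in>{0..1}. \<forall>c\<in>{0..1}. \<forall>d\<in>{0..1}.
        a \<le> b \<longrightarrow> c \<le> d \<longrightarrow> C b d + C a c - C b c - C a d \<ge> 0)"

definition is_diagonal :: "(real \<Rightarrow> real) \<Rightarrow> bool" where
  "is_diagonal \<delta> \<longleftrightarrow>
     (\<forall>x\<in>{0..1}. \<delta> x \<in> {0..1} \<and> \<delta> x \<le> x) \<and>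
     (\<forall>x\<in>{0..1}. \<forall>y\<in>{0..1}. x \<le> y \<longrightarrow> 0 \<le> \<delta> y - \<delta> x \<and> \<delta> y - \<delta> x \<le> 2 * (y - x)) \<and>
     \<delta> 1 = 1"

definition delta_hat :: "(real \<Rightarrow> real) \<Rightarrow> real \<Rightarrow> real" where
  "delta_hat \<delta> x = x - \<delta> x"

definition asym :: "(real \<Rightarrow> real \<Rightarrow> real) \<Rightarrow> real" where
  "asym C = Sup {\<bar>C x y - C y x\<bar> | x y. x \<in> {0..1} \<and> y \<in> {0..1}}"

definition mu_delta :: "(real \<Rightarrow> real) \<Rightarrow> real" where
  "mu_delta \<delta> = Sup {asym C | C. is_copula C \<and> (\<forall>t\<in>{0..1}. C t t = \<delta> t)}"

definition total_variation :: "(real \<Rightarrow> real) \<Rightarrow> real \<Rightarrow> real \<Rightarrow> real" where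
  "total_variation h a b = Sup {(\<Sum>i<n. \<bar>h (t (Suc i)) - h (t i)\<bar>) | t n.
       t 0 = a \<and> t n = b \<and> (\<forall>i<n. t i \<le> t (Suc i))}"

definition signed_TV :: "(real \<Rightarrow> real) \<Rightarrow> real \<Rightarrow> real \<Rightarrow> real" where
  "signed_TV h x y = (if x \<le> y then total_variation h x y else - total_variation h y x)"

definition f_delta :: "(real \<Rightarrow> real) \<Rightarrow> real \<Rightarrow> real \<Rightarrow> real" where
  "f_delta \<delta> x y = y - (delta_hat \<delta> x + delta_hat \<delta> y + signed_TV (delta_hat \<delta>) x y) / 2"

definition Df_open :: "(real \<Rightarrow> real) \<Rightarrow> (real \<times> real) set" where
  "Df_open \<delta> = {(x, y). x \<in> {0..1} \<and> y \<in> {0..1} \<and> f_delta \<delta> x y < min x y}"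

definition Df :: "(real \<Rightarrow> real) \<Rightarrow> (real \<times> real) set" where
  "Df \<delta> = closure (Df_open \<delta>) \<union> {(x, x) | x. x \<in> {0..1}}"

definition gU :: "(real \<Rightarrow> real) \<Rightarrow> real \<Rightarrow> real" where
  "gU \<delta> x = (GREATEST y. y \<in> {0..1} \<and> (x, y) \<in> Df \<delta>)"

end

theory Submission
  imports Defs
begin

text \<open>Write \<open>m(x,y)\<close> for the minimum of \<open>t - \<delta>(t)\<close> on \<open>[x,y]\<close>. For \<open>x \<le> y\<close> the rectangle inequalities
  bound every copula \<open>C\<close> with diagonal \<open>\<delta>\<close> by \<open>C(x,y) \<le> min x (f(x,y))\<close>, where telescoping along a
  partition of \<open>[x,y]\<close> produces the total variation term of \<open>f\<close>, and by \<open>C(y,x) \<ge> x - m(x,y)\<close>.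
  So \<open>C(x,y) - C(y,x) \<le> B(x,y) = min 0 (f(x,y) - x) + m(x,y)\<close>, and the copula that equals
  \<open>min x (f(x,y))\<close> at \<open>(x,y)\<close> and \<open>x - m(x,y)\<close> at \<open>(y,x)\<close> attains this bound, whence \<open>\<mu>\<^sub>\<delta>\<close> is the
  maximum of \<open>B\<close> over \<open>x \<le> y\<close>. Finally \<open>y \<mapsto> f(x,y) + m(x,y)\<close> is nondecreasing, \<open>f(x, g\<^sub>U(x)) = x\<close>,
  and \<open>m(x, \<cdot>)\<close> is nonincreasing, so for fixed \<open>x\<close> the maximum of \<open>B(x, \<cdot>)\<close> is \<open>m(x, g\<^sub>U(x))\<close>.\<close>

section \<open>Total variation\<close>

definition variation_sums :: "(real \<Rightarrow> real) \<Rightarrow> real \<Rightarrow> real \<Rightarrow> real set" where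
  "variation_sums h a b = {(\<Sum>i<n. \<bar>h (t (Suc i)) - h (t i)\<bar>) | t n.
     t 0 = a \<and> t n = b \<and> (\<forall>i<n. t i \<le> t (Suc i))}"

lemma total_variation_eq_Sup: "total_variation h a b = Sup (variation_sums h a b)"
  unfolding total_variation_def variation_sums_def ..

lemma abs_diff_in_variation_sums:
  assumes "a \<le> b"
  shows "\<bar>h b - h a\<bar> \<in> variation_sums h a b"
  unfolding variation_sums_def
  by (intro CollectI exI[of _ "\<lambda>i. if i = 0 then a else b"] exI[of _ 1]) (use assms in auto)

lemma variation_sums_nonempty: "a \<le> b \<Longrightarrow> variation_sums h a b \<noteq> {}"
  using abs_diff_in_variation_sums by blast

lemma variation_sums_concat:
  assumes "s1 \<in> variation_sums h a b" "s2 \<in> variation_sums h b c"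
  shows "s1 + s2 \<in> variation_sums h a c"
proof -
  obtain t n where t: "s1 = (\<Sum>i<n. \<bar>h (t (Suc i)) - h (t i)\<bar>)" "t 0 = a" "t n = b"
    and t_mono: "\<forall>i<n. t i \<le> t (Suc i)"
    using assms(1) unfolding variation_sums_def by blast
  obtain u k where u: "s2 = (\<Sum>i<k. \<bar>h (u (Suc i)) - h (u i)\<bar>)" "u 0 = b" "u k = c"
    and u_mono: "\<forall>i<k. u i \<le> u (Suc i)"
    using assms(2) unfolding variation_sums_def by blast
  define r where "r i = (if i \<le> n then t i else u (i - n))" for i
  have r_sum: "(\<Sum>i<n + m. \<bar>h (r (Suc i)) - h (r i)\<bar>)
      = s1 + (\<Sum>i<m. \<bar>h (u (Suc i)) - h (u i)\<bar>)" for m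
  proof (induction m)
    case 0
    show ?case unfolding t(1) r_def by (auto intro!: sum.cong simp: Suc_leI)
  next
    case (Suc m)
    have "r (n + m) = u m" "r (Suc (n + m)) = u (Suc m)" using t(3) u(2) unfolding r_def by auto
    then show ?case using Suc by simp
  qed
  have "\<forall>i<n + k. r i \<le> r (Suc i)"
  proof (intro allI impI)
    fix i assume "i < n + k"
    show "r i \<le> r (Suc i)"
    proof (cases "i < n")
      case True
      then show ?thesis using t_mono unfolding r_def by simp
    next
      case False
      then have "i - n < k" "Suc i - n = Suc (i - n)" using \<open>i < n + k\<close> by auto
      then show ?thesis using u_mono t(3) u(2) False unfolding r_def by auto
    qed
  qed
  moreover have "r 0 = a" "r (n + k) = c" using t u unfolding r_def by auto
  ultimately show ?thesis
    unfolding variation_sums_def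
    by (intro CollectI exI[of _ r] exI[of _ "n + k"]) (use r_sum[of k] u(1) in auto)
qed

lemma variation_sums_le_increment:
  assumes incr: "\<And>u v. a \<le> u \<Longrightarrow> u \<le> v \<Longrightarrow> v \<le> b \<Longrightarrow> \<bar>h v - h u\<bar> \<le> g v - g u"
    and "s \<in> variation_sums h a b"
  shows "s \<le> g b - g a"
proof -
  obtain t n where t: "s = (\<Sum>i<n. \<bar>h (t (Suc i)) - h (t i)\<bar>)" "t 0 = a" "t n = b"
    and t_mono: "\<forall>i<n. t i \<le> t (Suc i)"
    using assms(2) unfolding variation_sums_def by blast
  have t_mono_le: "t i \<le> t j" if "i \<le> j" "j \<le> n" for i j
    by (rule lift_Suc_mono_le_ivl[where N = "{..<n}"]) (use t_mono that in auto)
  have "s \<le> (\<Sum>i<n. g (t (Suc i)) - g (t i))"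
    unfolding t(1)
    by (intro sum_mono incr) (use t t_mono_le t_mono in \<open>auto simp: Suc_leI\<close>)
  also have "\<dots> = g b - g a" using sum_lessThan_telescope[of "g \<circ> t" n] t by simp
  finally show ?thesis .
qed

lemma total_variation_le_increment:
  assumes "\<And>u v. a \<le> u \<Longrightarrow> u \<le> v \<Longrightarrow> v \<le> b \<Longrightarrow> \<bar>h v - h u\<bar> \<le> g v - g u" "a \<le> b"
  shows "total_variation h a b \<le> g b - g a"
  unfolding total_variation_eq_Sup
  by (intro cSup_least variation_sums_nonempty variation_sums_le_increment[OF assms(1)] assms(2))

lemma total_variation_refl: "total_variation h a a = 0"
proof -
  have h_const: "\<bar>h v - h u\<bar> \<le> 0 - 0" if "a \<le> u" "u \<le> v" "v \<le> a" for u v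
  proof -
    have "u = v" using that by simp
    then show ?thesis by simp
  qed
  have "total_variation h a a \<le> 0 - 0"
    by (rule total_variation_le_increment[where g = "\<lambda>_. 0", OF h_const]) auto
  moreover have "0 \<in> variation_sums h a a" using abs_diff_in_variation_sums[of a a h] by simp
  then have "0 \<le> total_variation h a a"
    unfolding total_variation_eq_Sup
    by (intro cSup_upper bdd_aboveI[of _ "0 - 0"] variation_sums_le_increment[OF h_const]) auto
  ultimately show ?thesis by simp
qed

lemma abs_diff_le_total_variation:
  assumes "a \<le> b" "bdd_above (variation_sums h a b)"
  shows "\<bar>h b - h a\<bar> \<le> total_variation h a b"
  unfolding total_variation_eq_Sup by (rule cSup_upper[OF abs_diff_in_variation_sums]) fact+

lemma bdd_above_variation_sums_subinterval:
  assumes "bdd_above (variation_sums h a b)" "a \<le> a'" "a' \<le> b'" "b' \<le> b"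
  shows "bdd_above (variation_sums h a' b')"
proof -
  obtain M where M: "\<And>s. s \<in> variation_sums h a b \<Longrightarrow> s \<le> M"
    using assms(1) by (auto simp: bdd_above_def)
  show ?thesis
  proof (rule bdd_aboveI)
    fix s assume "s \<in> variation_sums h a' b'"
    then have "\<bar>h a' - h a\<bar> + s + \<bar>h b - h b'\<bar> \<in> variation_sums h a b"
      using abs_diff_in_variation_sums assms(2,4) by (blast intro: variation_sums_concat)
    then show "s \<le> M" using M by fastforce
  qed
qed

lemma total_variation_superadditive:
  assumes "a \<le> b" "b \<le> c" "bdd_above (variation_sums h a c)"
  shows "total_variation h a b + total_variation h b c \<le> total_variation h a c"
proof -
  have "s1 \<le> total_variation h a c - s2"
    if "s1 \<in> variation_sums h a b" "s2 \<in> variation_sums h b c" for s1 s2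
    using cSup_upper[OF variation_sums_concat[OF that] assms(3)]
    unfolding total_variation_eq_Sup by simp
  then have "total_variation h a b \<le> total_variation h a c - s2"
    if "s2 \<in> variation_sums h b c" for s2
    unfolding total_variation_eq_Sup[of h a b]
    using that by (intro cSup_least variation_sums_nonempty assms(1)) auto
  then have "total_variation h b c \<le> total_variation h a c - total_variation h a b"
    unfolding total_variation_eq_Sup[of h b c]
    by (intro cSup_least variation_sums_nonempty assms(2)) (auto simp: algebra_simps)
  then show ?thesis by simp
qed

lemma total_variation_extend:
  assumes "u \<le> v" "v \<le> w" "bdd_above (variation_sums h u w)"
  shows "total_variation h u v + \<bar>h w - h v\<bar> \<le> total_variation h u w"
proof -
  have "\<bar>h w - h v\<bar> \<le> total_variation h v w"
    using assms by (intro abs_diff_le_total_variation bdd_above_variation_sums_subinterval[OF assms(3)]) auto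
  then show ?thesis using total_variation_superadditive[OF assms] by simp
qed

text \<open>Subadditivity: insert \<open>b\<close> into a partition of \<open>[a, c]\<close>, by induction on its length.\<close>

lemma variation_sums_le_split:
  assumes bdd: "bdd_above (variation_sums h a c)" and "a \<le> b" "b \<le> c"
    and "s \<in> variation_sums h a c"
  shows "s \<le> total_variation h a b + total_variation h b c"
proof -
  obtain t n where t: "s = (\<Sum>i<n. \<bar>h (t (Suc i)) - h (t i)\<bar>)" "t 0 = a" "t n = c"
    and t_mono: "\<forall>i<n. t i \<le> t (Suc i)"
    using assms(4) unfolding variation_sums_def by blast
  have t_mono_le: "t i \<le> t j" if "i \<le> j" "j \<le> n" for i j
    by (rule lift_Suc_mono_le_ivl[where N = "{..<n}"]) (use t_mono that in auto)
  have bdd': "bdd_above (variation_sums h u v)" if "a \<le> u" "u \<le> v" "v \<le> t m" "m \<le> n" for u v m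
    using bdd_above_variation_sums_subinterval[OF bdd] that t_mono_le[of m n] t(3) by auto
  have "(\<Sum>i<m. \<bar>h (t (Suc i)) - h (t i)\<bar>) \<le> total_variation h a b + total_variation h b (t m)"
    if "m \<le> n" "b \<le> t m" for m
    using that
  proof (induction m)
    case 0
    then have "b = a" using t(2) \<open>a \<le> b\<close> by simp
    then show ?case using t(2) by (simp add: total_variation_refl)
  next
    case (Suc m)
    let ?c = "t (Suc m)" and ?c' = "t m"
    have "a \<le> ?c'" "?c' \<le> ?c" using t_mono_le[of 0 m] t_mono_le[of m "Suc m"] t(2) Suc.prems by auto
    show ?case
    proof (cases "b \<le> ?c'")
      case True
      then show ?thesis
        using Suc total_variation_extend[of b ?c' ?c h] bdd'[of b ?c "Suc m"] \<open>?c' \<le> ?c\<close> \<open>a \<le> b\<close>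
        by simp
    next
      case False
      have "(\<Sum>i<m. \<bar>h (t (Suc i)) - h (t i)\<bar>) \<in> variation_sums h a ?c'"
        unfolding variation_sums_def
        by (intro CollectI exI[of _ t] exI[of _ m]) (use t(2) t_mono Suc.prems in auto)
      then have "(\<Sum>i<m. \<bar>h (t (Suc i)) - h (t i)\<bar>) \<le> total_variation h a ?c'"
        unfolding total_variation_eq_Sup
        using \<open>a \<le> ?c'\<close> Suc.prems by (intro cSup_upper bdd'[of _ _ m]) auto
      moreover have "total_variation h a ?c' + \<bar>h b - h ?c'\<bar> \<le> total_variation h a b"
        using \<open>a \<le> ?c'\<close> False Suc.prems by (intro total_variation_extend bdd'[of _ _ "Suc m"]) auto
      moreover have "\<bar>h ?c - h b\<bar> \<le> total_variation h b ?c"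
        using \<open>a \<le> b\<close> Suc.prems by (intro abs_diff_le_total_variation bdd'[of _ _ "Suc m"]) auto
      moreover have "\<bar>h ?c - h ?c'\<bar> \<le> \<bar>h b - h ?c'\<bar> + \<bar>h ?c - h b\<bar>" by linarith
      ultimately show ?thesis by simp
    qed
  qed
  from this[of n] show ?thesis using t(1,3) \<open>b \<le> c\<close> by simp
qed

lemma total_variation_add:
  assumes "a \<le> b" "b \<le> c" "bdd_above (variation_sums h a c)"
  shows "total_variation h a c = total_variation h a b + total_variation h b c"
proof (rule antisym)
  show "total_variation h a c \<le> total_variation h a b + total_variation h b c"
    unfolding total_variation_eq_Sup[of h a c]
    using assms by (intro cSup_least variation_sums_nonempty variation_sums_le_split) auto
qed (rule total_variation_superadditive[OF assms])

lemma l1_lipschitz_imp_continuous_on: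
  fixes g :: "real \<times> real \<Rightarrow> real"
  assumes "\<And>p q. p \<in> S \<Longrightarrow> q \<in> S \<Longrightarrow> \<bar>g p - g q\<bar> \<le> L * (\<bar>fst p - fst q\<bar> + \<bar>snd p - snd q\<bar>)"
    and "0 \<le> L"
  shows "continuous_on S g"
proof (rule lipschitz_on_continuous_on)
  show "(2 * L)-lipschitz_on S g"
  proof (rule lipschitz_onI)
    fix p q assume pq: "p \<in> S" "q \<in> S"
    have "\<bar>fst p - fst q\<bar> \<le> dist p q" "\<bar>snd p - snd q\<bar> \<le> dist p q"
      using dist_fst_le[of p q] dist_snd_le[of p q] by (simp_all add: dist_real_def)
    then have "L * (\<bar>fst p - fst q\<bar> + \<bar>snd p - snd q\<bar>) \<le> L * (2 * dist p q)"
      using assms(2) by (intro mult_left_mono) auto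
    then show "dist (g p) (g q) \<le> 2 * L * dist p q"
      using assms(1)[OF pq] by (simp add: dist_real_def)
  qed (use assms(2) in simp)
qed

definition triangle :: "(real \<times> real) set" where
  "triangle = {(x, y). 0 \<le> x \<and> x \<le> y \<and> y \<le> 1}"

lemma compact_triangle: "compact triangle"
proof -
  have "triangle = ({0..1} \<times> {0..1}) \<inter> {p. fst p \<le> snd p}"
    unfolding triangle_def by auto
  moreover have "closed {p :: real \<times> real. fst p \<le> snd p}"
    by (intro closed_Collect_le continuous_intros)
  ultimately show ?thesis
    using compact_Int_closed[OF compact_Times[OF compact_Icc compact_Icc]] by metis
qed

section \<open>Copulas\<close>

definition rect_volume :: "(real \<Rightarrow> real \<Rightarrow> real) \<Rightarrow> real \<Rightarrow> real \<Rightarrow> real \<Rightarrow> real \<Rightarrow> real" where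
  "rect_volume C a b c d = C b d + C a c - C b c - C a d"

lemma rect_volume_degenerate [simp]: "rect_volume C a a c d = 0" "rect_volume C a b c c = 0"
  unfolding rect_volume_def by simp_all

lemma copula_rect_volume_nonneg:
  assumes "is_copula C" "a \<in> {0..1}" "b \<in> {0..1}" "c \<in> {0..1}" "d \<in> {0..1}" "a \<le> b" "c \<le> d"
  shows "0 \<le> rect_volume C a b c d"
  using assms unfolding is_copula_def rect_volume_def by blast

lemma copula_boundary:
  assumes "is_copula C" "x \<in> {0..1}"
  shows "C x 0 = 0" "C 0 x = 0" "C x 1 = x" "C 1 x = x"
  using assms unfolding is_copula_def by blast+

lemma is_copulaI:
  assumes boundary: "\<And>x. x \<in> {0..1} \<Longrightarrow> C x 0 = 0 \<and> C 0 x = 0 \<and> C x 1 = x \<and> C 1 x = x"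
    and volume: "\<And>a b c d. a \<in> {0..1} \<Longrightarrow> b \<in> {0..1} \<Longrightarrow> c \<in> {0..1} \<Longrightarrow> d \<in> {0..1} \<Longrightarrow>
      a \<le> b \<Longrightarrow> c \<le> d \<Longrightarrow> 0 \<le> rect_volume C a b c d"
  shows "is_copula C"
proof -
  have "C x y \<in> {0..1}" if "x \<in> {0..1}" "y \<in> {0..1}" for x y
    using volume[of 0 x 0 y] volume[of 0 x y 1] boundary that
    unfolding rect_volume_def by auto
  then show ?thesis
    using boundary volume unfolding is_copula_def rect_volume_def by blast
qed

lemma copula_transpose:
  assumes "is_copula C"
  shows "is_copula (\<lambda>x y. C y x)"
proof (rule is_copulaI)
  show "C 0 x = 0 \<and> C x 0 = 0 \<and> C 1 x = x \<and> C x 1 = x" if "x \<in> {0..1}" for x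
    using copula_boundary[OF assms that] by blast
  show "0 \<le> rect_volume (\<lambda>x y. C y x) a b c d"
    if "a \<in> {0..1}" "b \<in> {0..1}" "c \<in> {0..1}" "d \<in> {0..1}" "a \<le> b" "c \<le> d" for a b c d
    using copula_rect_volume_nonneg[OF assms, of c d a b] that unfolding rect_volume_def by simp
qed

lemma copula_le_left:
  assumes "is_copula C" "x \<in> {0..1}" "y \<in> {0..1}"
  shows "C x y \<le> x"
  using copula_rect_volume_nonneg[OF assms(1), of 0 x y 1] copula_boundary[OF assms(1)] assms(2,3)
  unfolding rect_volume_def by auto

text \<open>Cut a general rectangle into nine cells along the diagonal square it contains.\<close>

lemma rect_volume_nonneg_of_cells:
  assumes cell: "\<And>u1 u2 v1 v2. 0 \<le> u1 \<Longrightarrow> u1 \<le> u2 \<Longrightarrow> u2 \<le> 1 \<Longrightarrow> 0 \<le> v1 \<Longrightarrow> v1 \<le> v2 \<Longrightarrow> v2 \<le> 1 \<Longrightarrow>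
      u2 \<le> v1 \<or> v2 \<le> u1 \<or> (u1 = v1 \<and> u2 = v2) \<Longrightarrow> 0 \<le> rect_volume K u1 u2 v1 v2"
    and "a \<in> {0..1}" "b \<in> {0..1}" "c \<in> {0..1}" "d \<in> {0..1}" "a \<le> b" "c \<le> d"
  shows "0 \<le> rect_volume K a b c d"
proof (cases "b \<le> c \<or> d \<le> a")
  case True
  then show ?thesis using cell assms by auto
next
  case False
  define p where "p = max a c"
  define q where "q = min b d"
  have pq: "a \<le> p" "c \<le> p" "p \<le> q" "q \<le> b" "q \<le> d" "p = a \<or> p = c" "q = b \<or> q = d"
    using False assms unfolding p_def q_def by auto
  have "rect_volume K a b c d =
      (rect_volume K a p c p + rect_volume K a p p q + rect_volume K a p q d)
    + (rect_volume K p q c p + rect_volume K p q p q + rect_volume K p q q d)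
    + (rect_volume K q b c p + rect_volume K q b p q + rect_volume K q b q d)"
    unfolding rect_volume_def by simp
  moreover have "0 \<le> rect_volume K a p c p" "0 \<le> rect_volume K q b q d"
    using pq by auto
  moreover have "0 \<le> rect_volume K a p p q" "0 \<le> rect_volume K a p q d" "0 \<le> rect_volume K p q q d"
    using pq assms by (auto intro: cell)
  moreover have "0 \<le> rect_volume K p q c p" "0 \<le> rect_volume K q b c p" "0 \<le> rect_volume K q b p q"
    using pq assms by (auto intro: cell)
  moreover have "0 \<le> rect_volume K p q p q"
    using pq assms by (auto intro: cell)
  ultimately show ?thesis by linarith
qed

lemma min_supermodular:
  fixes x1 x2 y1 y2 :: real
  assumes "x1 \<le> x2" "y1 \<le> y2"
  shows "min x2 y1 + min x1 y2 \<le> min x2 y2 + min x1 y1"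
  using assms by (auto simp: min_def)

lemma asym_le:
  assumes "\<And>x y. x \<in> {0..1} \<Longrightarrow> y \<in> {0..1} \<Longrightarrow> \<bar>C x y - C y x\<bar> \<le> M"
  shows "asym C \<le> M"
  unfolding asym_def using assms by (intro cSup_least) (auto intro!: exI[of _ 0])

lemma abs_le_asym:
  assumes "\<And>x y. x \<in> {0..1} \<Longrightarrow> y \<in> {0..1} \<Longrightarrow> \<bar>C x y - C y x\<bar> \<le> M"
    and "x \<in> {0..1}" "y \<in> {0..1}"
  shows "\<bar>C x y - C y x\<bar> \<le> asym C"
  unfolding asym_def using assms by (intro cSup_upper bdd_aboveI[of _ M]) auto

section \<open>Diagonal sections\<close>

locale diagonal_section =
  fixes \<delta> :: "real \<Rightarrow> real"
  assumes diagonal: "is_diagonal \<delta>"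
begin

abbreviation dhat :: "real \<Rightarrow> real" where
  "dhat \<equiv> delta_hat \<delta>"

lemma diagonal_bounds:
  assumes "x \<in> {0..1}"
  shows "0 \<le> \<delta> x" "\<delta> x \<le> x"
proof -
  have "\<forall>x\<in>{0..1}. \<delta> x \<in> {0..1} \<and> \<delta> x \<le> x"
    using diagonal unfolding is_diagonal_def by (rule conjunct1)
  then show "0 \<le> \<delta> x" "\<delta> x \<le> x" using assms by auto
qed

lemma dhat_increment:
  assumes "0 \<le> x" "x \<le> y" "y \<le> 1"
  shows "\<bar>dhat y - dhat x\<bar> \<le> y - x"
proof -
  have "\<forall>x\<in>{0..1}. \<forall>y\<in>{0..1}. x \<le> y \<longrightarrow> 0 \<le> \<delta> y - \<delta> x \<and> \<delta> y - \<delta> x \<le> 2 * (y - x)"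
    using diagonal unfolding is_diagonal_def by (elim conjE)
  then have "0 \<le> \<delta> y - \<delta> x" "\<delta> y - \<delta> x \<le> 2 * (y - x)" using assms by auto
  then show ?thesis unfolding delta_hat_def by (simp add: abs_le_iff)
qed

lemma dhat_nonneg: "x \<in> {0..1} \<Longrightarrow> 0 \<le> dhat x"
  using diagonal_bounds(2) unfolding delta_hat_def by simp

lemma dhat_0 [simp]: "dhat 0 = 0"
  using diagonal_bounds[of 0] unfolding delta_hat_def by simp

lemma dhat_1 [simp]: "dhat 1 = 0"
proof -
  have "\<delta> 1 = 1" using diagonal unfolding is_diagonal_def by (elim conjE)
  then show ?thesis unfolding delta_hat_def by simp
qed

lemma bdd_above_variation_sums_dhat:
  assumes "0 \<le> a" "b \<le> 1"
  shows "bdd_above (variation_sums dhat a b)"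
proof (rule bdd_aboveI)
  fix s assume "s \<in> variation_sums dhat a b"
  then show "s \<le> b - a"
    by (rule variation_sums_le_increment[where g = "\<lambda>t. t", rotated]) (use assms dhat_increment in simp)
qed

lemma f_delta_eq_total_variation:
  "x \<le> y \<Longrightarrow> f_delta \<delta> x y = y - (dhat x + dhat y + total_variation dhat x y) / 2"
  unfolding f_delta_def signed_TV_def by simp

lemma f_delta_diag: "f_delta \<delta> x x = x - dhat x"
  by (simp add: f_delta_eq_total_variation total_variation_refl)

definition dvar :: "real \<Rightarrow> real" where
  "dvar u = total_variation dhat 0 u"

lemma total_variation_dhat_eq:
  assumes "0 \<le> a" "a \<le> b" "b \<le> 1"
  shows "total_variation dhat a b = dvar b - dvar a"
  using total_variation_add[OF assms(1,2) bdd_above_variation_sums_dhat[of 0 b]] assms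
  unfolding dvar_def by simp

lemma dhat_increment_le_dvar:
  assumes "0 \<le> u" "u \<le> v" "v \<le> 1"
  shows "\<bar>dhat v - dhat u\<bar> \<le> dvar v - dvar u"
  using abs_diff_le_total_variation[OF assms(2) bdd_above_variation_sums_dhat] assms
  by (simp add: total_variation_dhat_eq)

lemma dvar_increment_le:
  assumes "0 \<le> u" "u \<le> v" "v \<le> 1"
  shows "dvar v - dvar u \<le> v - u"
  using total_variation_le_increment[where g = "\<lambda>t. t", OF dhat_increment] assms
  by (simp add: total_variation_dhat_eq)

lemma f_delta_eq:
  assumes "0 \<le> x" "x \<le> y" "y \<le> 1"
  shows "f_delta \<delta> x y = y - (dhat x + dhat y + dvar y - dvar x) / 2"
  using assms by (simp add: f_delta_eq_total_variation total_variation_dhat_eq)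

lemma f_delta_mono_right:
  assumes "0 \<le> x" "x \<le> y" "y \<le> y'" "y' \<le> 1"
  shows "f_delta \<delta> x y \<le> f_delta \<delta> x y'" "f_delta \<delta> x y' - f_delta \<delta> x y \<le> 2 * (y' - y)"
proof -
  have incr: "\<bar>dhat y' - dhat y\<bar> \<le> dvar y' - dvar y" "dvar y' - dvar y \<le> y' - y"
    using dhat_increment_le_dvar[of y y'] dvar_increment_le[of y y'] assms by simp_all
  have eq: "2 * (f_delta \<delta> x y' - f_delta \<delta> x y) = 2 * (y' - y) - (dhat y' - dhat y) - (dvar y' - dvar y)"
    using f_delta_eq[of x y] f_delta_eq[of x y'] assms by (simp add: field_simps)
  show "f_delta \<delta> x y \<le> f_delta \<delta> x y'"
    using incr eq abs_ge_self[of "dhat y' - dhat y"] by argo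
  show "f_delta \<delta> x y' - f_delta \<delta> x y \<le> 2 * (y' - y)"
    using incr eq abs_ge_self[of "dhat y' - dhat y"] by argo
qed

lemma dhat_lipschitz:
  assumes "x \<in> {0..1}" "y \<in> {0..1}"
  shows "\<bar>dhat y - dhat x\<bar> \<le> \<bar>y - x\<bar>"
proof (cases "x \<le> y")
  case True
  then show ?thesis using dhat_increment[of x y] assms by simp
next
  case False
  then show ?thesis using dhat_increment[of y x] assms by (simp add: abs_minus_commute)
qed

lemma dvar_lipschitz:
  assumes "x \<in> {0..1}" "y \<in> {0..1}"
  shows "\<bar>dvar y - dvar x\<bar> \<le> \<bar>y - x\<bar>"
proof (cases "x \<le> y")
  case True
  then show ?thesis
    using dhat_increment_le_dvar[of x y] dvar_increment_le[of x y] assms by simp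
next
  case False
  then show ?thesis
    using dhat_increment_le_dvar[of y x] dvar_increment_le[of y x] assms by simp
qed

lemma f_delta_lipschitz:
  assumes "0 \<le> x" "x \<le> y" "y \<le> 1" "0 \<le> x'" "x' \<le> y'" "y' \<le> 1"
  shows "\<bar>f_delta \<delta> x' y' - f_delta \<delta> x y\<bar> \<le> 2 * (\<bar>x - x'\<bar> + \<bar>y - y'\<bar>)"
proof -
  have "\<bar>dhat x' - dhat x\<bar> \<le> \<bar>x' - x\<bar>" "\<bar>dhat y' - dhat y\<bar> \<le> \<bar>y' - y\<bar>"
    "\<bar>dvar x' - dvar x\<bar> \<le> \<bar>x' - x\<bar>" "\<bar>dvar y' - dvar y\<bar> \<le> \<bar>y' - y\<bar>"
    using dhat_lipschitz dvar_lipschitz assms by simp_all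
  then show ?thesis
    unfolding f_delta_eq[OF assms(1-3)] f_delta_eq[OF assms(4-6)] abs_le_iff
      abs_minus_commute[of x' x] abs_minus_commute[of y' y]
    by argo
qed

abbreviation dmin :: "real \<Rightarrow> real \<Rightarrow> real" where
  "dmin x y \<equiv> Inf (dhat ` {x..y})"

lemma bdd_below_dhat_image: "0 \<le> x \<Longrightarrow> y \<le> 1 \<Longrightarrow> bdd_below (dhat ` {x..y})"
  by (rule bdd_belowI[of _ 0]) (auto intro: dhat_nonneg)

lemma dmin_le: "0 \<le> x \<Longrightarrow> y \<le> 1 \<Longrightarrow> t \<in> {x..y} \<Longrightarrow> dmin x y \<le> dhat t"
  by (rule cInf_lower) (auto intro: bdd_below_dhat_image)

lemma le_dmin: "x \<le> y \<Longrightarrow> (\<And>t. t \<in> {x..y} \<Longrightarrow> c \<le> dhat t) \<Longrightarrow> c \<le> dmin x y"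
  by (rule cInf_greatest) auto

lemma dmin_nonneg: "0 \<le> x \<Longrightarrow> x \<le> y \<Longrightarrow> y \<le> 1 \<Longrightarrow> 0 \<le> dmin x y"
  by (rule le_dmin) (auto intro: dhat_nonneg)

lemma dmin_0_left: "x \<in> {0..1} \<Longrightarrow> dmin 0 x = 0"
  using dmin_nonneg[of 0 x] dmin_le[of 0 x 0] by simp

lemma dmin_1_right: "x \<in> {0..1} \<Longrightarrow> dmin x 1 = 0"
  using dmin_nonneg[of x 1] dmin_le[of x 1 1] by simp

lemma dmin_split:
  assumes "0 \<le> x" "x \<le> y" "y \<le> z" "z \<le> 1"
  shows "dmin x z = min (dmin x y) (dmin y z)"
proof -
  have "dhat ` {x..z} = dhat ` {x..y} \<union> dhat ` {y..z}"
    using assms by (auto simp: image_Un[symmetric] ivl_disj_un_two_touch)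
  then show ?thesis
    using cInf_union_distrib[of "dhat ` {x..y}" "dhat ` {y..z}"] bdd_below_dhat_image assms
    by (simp add: inf_min)
qed

lemma dmin_lipschitz:
  assumes "0 \<le> x" "x \<le> y" "y \<le> 1" "0 \<le> x'" "x' \<le> y'" "y' \<le> 1"
  shows "dmin x' y' \<le> dmin x y + \<bar>x - x'\<bar> + \<bar>y - y'\<bar>"
proof -
  have "dmin x' y' - \<bar>x - x'\<bar> - \<bar>y - y'\<bar> \<le> dmin x y"
  proof (rule le_dmin)
    fix t assume t: "t \<in> {x..y}"
    define t' where "t' = max x' (min y' t)"
    have t': "t' \<in> {x'..y'}" "\<bar>t' - t\<bar> \<le> \<bar>x - x'\<bar> + \<bar>y - y'\<bar>"
      using assms t unfolding t'_def by (auto simp: abs_if max_def min_def)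
    then have "\<bar>dhat t' - dhat t\<bar> \<le> \<bar>x - x'\<bar> + \<bar>y - y'\<bar>"
      using dhat_lipschitz[of t t'] t assms by fastforce
    then show "dmin x' y' - \<bar>x - x'\<bar> - \<bar>y - y'\<bar> \<le> dhat t"
      using dmin_le[OF assms(4,6) t'(1)] by (simp add: abs_le_iff)
  qed (fact assms)
  then show ?thesis by simp
qed

lemma continuous_on_f_delta: "continuous_on triangle (\<lambda>p. f_delta \<delta> (fst p) (snd p))"
proof (rule l1_lipschitz_imp_continuous_on[where L = 2])
  fix p q assume "p \<in> triangle" "q \<in> triangle"
  then show "\<bar>f_delta \<delta> (fst p) (snd p) - f_delta \<delta> (fst q) (snd q)\<bar>
      \<le> 2 * (\<bar>fst p - fst q\<bar> + \<bar>snd p - snd q\<bar>)"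
    using f_delta_lipschitz[of "fst q" "snd q" "fst p" "snd p"]
    unfolding triangle_def by (auto simp: abs_minus_commute)
qed simp

lemma continuous_on_dmin: "continuous_on triangle (\<lambda>p. dmin (fst p) (snd p))"
proof (rule l1_lipschitz_imp_continuous_on[where L = 1])
  fix p q assume "p \<in> triangle" "q \<in> triangle"
  then show "\<bar>dmin (fst p) (snd p) - dmin (fst q) (snd q)\<bar> \<le> 1 * (\<bar>fst p - fst q\<bar> + \<bar>snd p - snd q\<bar>)"
    using dmin_lipschitz[of "fst q" "snd q" "fst p" "snd p"] dmin_lipschitz[of "fst p" "snd p" "fst q" "snd q"]
    unfolding triangle_def by (auto simp: abs_le_iff abs_minus_commute)
qed simp

subsection \<open>Upper bound on the asymmetry\<close>

definition asym_bound :: "real \<Rightarrow> real \<Rightarrow> real" where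
  "asym_bound x y = min 0 (f_delta \<delta> x y - x) + dmin x y"

lemma copula_diag_eq:
  assumes "\<forall>t\<in>{0..1}. C t t = \<delta> t" "t \<in> {0..1}"
  shows "C t t = t - dhat t"
  using assms unfolding delta_hat_def by simp

text \<open>Comparing the horizontal section \<open>C(x, \<cdot>)\<close> with the diagonal, through the rectangles
  \<open>[x,a] \<times> [a,b]\<close> and \<open>[a,b] \<times> [0,b]\<close> if \<open>dhat\<close> increases from \<open>a\<close> to \<open>b\<close>, and \<open>[x,1] \<times> [a,b]\<close> otherwise.\<close>

lemma copula_section_increment:
  assumes C: "is_copula C" and diag: "\<forall>t\<in>{0..1}. C t t = \<delta> t"
    and "0 \<le> x" "x \<le> a" "a \<le> b" "b \<le> 1"
  shows "\<bar>dhat b - dhat a\<bar> \<le> 2 * (b - a) - (dhat b - dhat a) - 2 * (C x b - C x a)"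
proof (cases "dhat a \<le> dhat b")
  case True
  have "0 \<le> rect_volume C x a a b" "0 \<le> rect_volume C a b 0 b"
    using assms by (intro copula_rect_volume_nonneg[OF C]; simp)+
  moreover have "C a 0 = 0" "C b 0 = 0" "C a a = a - dhat a" "C b b = b - dhat b"
    using assms copula_boundary[OF C] copula_diag_eq[where C = C, OF diag] by simp_all
  ultimately show ?thesis
    using True unfolding rect_volume_def by (simp add: abs_of_nonneg)
next
  case False
  have "0 \<le> rect_volume C x 1 a b"
    using assms by (intro copula_rect_volume_nonneg[OF C]; simp)
  moreover have "C 1 a = a" "C 1 b = b"
    using assms copula_boundary[OF C] by simp_all
  ultimately show ?thesis
    using False unfolding rect_volume_def by (simp add: abs_of_neg)
qed

lemma copula_le_f_delta:
  assumes C: "is_copula C" and diag: "\<forall>t\<in>{0..1}. C t t = \<delta> t"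
    and "0 \<le> x" "x \<le> y" "y \<le> 1"
  shows "C x y \<le> f_delta \<delta> x y"
proof -
  have "total_variation dhat x y \<le> (2 * y - dhat y - 2 * C x y) - (2 * x - dhat x - 2 * C x x)"
    by (rule total_variation_le_increment[where g = "\<lambda>v. 2 * v - dhat v - 2 * C x v"])
      (use copula_section_increment[OF C diag] assms in \<open>force simp: algebra_simps\<close>)+
  moreover have "C x x = x - dhat x" using copula_diag_eq[where C = C, OF diag] assms by simp
  ultimately show ?thesis
    using assms by (simp add: f_delta_eq_total_variation field_simps)
qed

lemma copula_ge_diff_dmin:
  assumes C: "is_copula C" and diag: "\<forall>t\<in>{0..1}. C t t = \<delta> t"
    and "0 \<le> x" "x \<le> y" "y \<le> 1"
  shows "x - dmin x y \<le> C y x"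
proof -
  have "x - C y x \<le> dmin x y"
  proof (rule le_dmin)
    fix t assume t: "t \<in> {x..y}"
    have "0 \<le> rect_volume C t y 0 x" "0 \<le> rect_volume C t 1 x t"
      using assms t by (intro copula_rect_volume_nonneg[OF C]; simp)+
    moreover have "C t 0 = 0" "C y 0 = 0" "C 1 t = t" "C 1 x = x" "C t t = t - dhat t"
      using assms t copula_boundary[OF C] copula_diag_eq[where C = C, OF diag] by simp_all
    ultimately show "x - C y x \<le> dhat t"
      unfolding rect_volume_def by simp
  qed (fact assms)
  then show ?thesis by simp
qed

lemma copula_asym_le_asym_bound:
  assumes C: "is_copula C" and diag: "\<forall>t\<in>{0..1}. C t t = \<delta> t"
    and "0 \<le> x" "x \<le> y" "y \<le> 1"
  shows "C x y - C y x \<le> asym_bound x y"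
  using copula_le_left[OF C, of x y] copula_le_f_delta[OF C diag, of x y] copula_ge_diff_dmin[OF C diag, of x y] assms
  unfolding asym_bound_def by (simp add: min_def)

lemma copula_abs_asym_le:
  assumes C: "is_copula C" and diag: "\<forall>t\<in>{0..1}. C t t = \<delta> t"
    and M: "\<And>x y. 0 \<le> x \<Longrightarrow> x \<le> y \<Longrightarrow> y \<le> 1 \<Longrightarrow> asym_bound x y \<le> M"
    and "x \<in> {0..1}" "y \<in> {0..1}"
  shows "\<bar>C x y - C y x\<bar> \<le> M"
proof -
  have diag': "\<forall>t\<in>{0..1}. (\<lambda>x y. C y x) t t = \<delta> t" using diag by simp
  have *: "\<bar>C a b - C b a\<bar> \<le> M" if "0 \<le> a" "a \<le> b" "b \<le> 1" for a b
    using copula_asym_le_asym_bound[OF C diag that] M[OF that]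
      copula_asym_le_asym_bound[OF copula_transpose[OF C] diag' that]
    by (simp add: abs_le_iff)
  show ?thesis
    using *[of x y] *[of y x] assms(4,5) by (cases "x \<le> y") (auto simp: abs_minus_commute)
qed

subsection \<open>A copula attaining the bound\<close>

definition extremal_copula :: "real \<Rightarrow> real \<Rightarrow> real" where
  "extremal_copula u v = (if u \<le> v then min u (f_delta \<delta> u v) else v - dmin v u)"

lemma extremal_copula_above: "u \<le> v \<Longrightarrow> extremal_copula u v = min u (f_delta \<delta> u v)"
  unfolding extremal_copula_def by simp

lemma extremal_copula_below:
  assumes "0 \<le> v" "v \<le> u" "u \<le> 1"
  shows "extremal_copula u v = v - dmin v u"
proof (cases "u = v")
  case True
  then show ?thesis
    using dhat_nonneg[of u] assms unfolding extremal_copula_def by (simp add: f_delta_diag)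
qed (use assms in \<open>simp add: extremal_copula_def\<close>)

lemma extremal_copula_diag: "t \<in> {0..1} \<Longrightarrow> extremal_copula t t = \<delta> t"
  using extremal_copula_below[of t t] by (simp add: delta_hat_def)

lemma asym_extremal_copula:
  assumes "0 \<le> x" "x \<le> y" "y \<le> 1"
  shows "extremal_copula x y - extremal_copula y x = asym_bound x y"
  using extremal_copula_above[of x y] extremal_copula_below[OF assms] assms
  unfolding asym_bound_def by (simp add: min_def)

text \<open>Above the diagonal the copula has the form \<open>\<alpha>(u) + min (\<pi>(u)) (\<beta>(v))\<close> with
  \<open>\<pi>\<close> and \<open>\<beta>\<close> nondecreasing, which is 2-increasing because \<open>min\<close> is supermodular.\<close>

lemma rect_volume_extremal_copula_above:
  assumes "0 \<le> u1" "u1 \<le> u2" "u2 \<le> v1" "v1 \<le> v2" "v2 \<le> 1"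
  shows "0 \<le> rect_volume extremal_copula u1 u2 v1 v2"
proof -
  define \<alpha> where "\<alpha> u = (dvar u - dhat u) / 2" for u
  define \<pi> where "\<pi> u = u - \<alpha> u" for u
  define \<beta> where "\<beta> v = v - (dhat v + dvar v) / 2" for v
  have K: "extremal_copula u v = \<alpha> u + min (\<pi> u) (\<beta> v)" if "0 \<le> u" "u \<le> v" "v \<le> 1" for u v
  proof -
    have "f_delta \<delta> u v = \<alpha> u + \<beta> v"
      using f_delta_eq[OF that] unfolding \<alpha>_def \<beta>_def by (simp add: field_simps)
    then show ?thesis
      using extremal_copula_above[OF that(2)] unfolding \<pi>_def by (simp add: min_def)
  qed
  have incr: "\<bar>dhat b - dhat a\<bar> \<le> dvar b - dvar a" "dvar b - dvar a \<le> b - a"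
    if "0 \<le> a" "a \<le> b" "b \<le> 1" for a b
    using dhat_increment_le_dvar[OF that] dvar_increment_le[OF that] by simp_all
  have "\<pi> u1 \<le> \<pi> u2" "\<beta> v1 \<le> \<beta> v2"
    using incr[of u1 u2] incr[of v1 v2] assms unfolding \<pi>_def \<alpha>_def \<beta>_def
    by (simp_all add: abs_le_iff field_simps)
  then show ?thesis
    using min_supermodular[of "\<pi> u1" "\<pi> u2" "\<beta> v1" "\<beta> v2"] K assms
    unfolding rect_volume_def by simp
qed

lemma rect_volume_extremal_copula_below:
  assumes "0 \<le> v1" "v1 \<le> v2" "v2 \<le> u1" "u1 \<le> u2" "u2 \<le> 1"
  shows "0 \<le> rect_volume extremal_copula u1 u2 v1 v2"
proof -
  have "rect_volume extremal_copula u1 u2 v1 v2 = dmin v1 u2 + dmin v2 u1 - dmin v2 u2 - dmin v1 u1"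
    using extremal_copula_below[of v1 u1] extremal_copula_below[of v1 u2]
      extremal_copula_below[of v2 u1] extremal_copula_below[of v2 u2] assms
    unfolding rect_volume_def by simp
  moreover have "dmin v1 u2 = min (dmin v1 v2) (dmin v2 u2)" "dmin v2 u2 = min (dmin v2 u1) (dmin u1 u2)"
    "dmin v1 u1 = min (dmin v1 v2) (dmin v2 u1)"
    using dmin_split[of v1 v2 u2] dmin_split[of v2 u1 u2] dmin_split[of v1 v2 u1] assms by simp_all
  ultimately show ?thesis
    by (simp add: min_def)
qed

lemma rect_volume_extremal_copula_diagonal:
  assumes "0 \<le> a" "a \<le> b" "b \<le> 1"
  shows "0 \<le> rect_volume extremal_copula a b a b"
proof -
  have "dhat a + dhat b - total_variation dhat a b \<le> 2 * dmin a b"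
  proof -
    have "(dhat a + dhat b - total_variation dhat a b) / 2 \<le> dmin a b"
    proof (rule le_dmin)
      fix t assume t: "t \<in> {a..b}"
      have "total_variation dhat a b = total_variation dhat a t + total_variation dhat t b"
        using t assms by (intro total_variation_add bdd_above_variation_sums_dhat) auto
      moreover have "\<bar>dhat t - dhat a\<bar> \<le> total_variation dhat a t" "\<bar>dhat b - dhat t\<bar> \<le> total_variation dhat t b"
        using t assms by (intro abs_diff_le_total_variation bdd_above_variation_sums_dhat; simp)+
      ultimately show "(dhat a + dhat b - total_variation dhat a b) / 2 \<le> dhat t"
        by (simp add: abs_le_iff)
    qed (fact assms)
    then show ?thesis by simp
  qed
  moreover have "extremal_copula a b \<le> f_delta \<delta> a b" "extremal_copula b a = a - dmin a b"
    "extremal_copula a a = a - dhat a" "extremal_copula b b = b - dhat b"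
    using extremal_copula_above[OF assms(2)] extremal_copula_below[OF assms] extremal_copula_diag assms
    by (simp_all add: delta_hat_def)
  ultimately show ?thesis
    using assms unfolding rect_volume_def by (simp add: f_delta_eq_total_variation field_simps)
qed

lemma extremal_copula_is_copula: "is_copula extremal_copula"
proof (rule is_copulaI)
  fix x :: real assume x: "x \<in> {0..1}"
  show "extremal_copula x 0 = 0 \<and> extremal_copula 0 x = 0 \<and> extremal_copula x 1 = x \<and> extremal_copula 1 x = x"
  proof (intro conjI)
    show "extremal_copula x 0 = 0" "extremal_copula 1 x = x"
      using extremal_copula_below[of 0 x] extremal_copula_below[of x 1] dmin_0_left dmin_1_right x
      by simp_all
    have "dvar x - dvar 0 \<le> x" "dhat x \<le> x" "dvar 1 - dvar x \<le> 1 - x" "dhat x \<le> 1 - x"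
      using dvar_increment_le[of 0 x] dvar_increment_le[of x 1] dhat_increment[of 0 x] dhat_increment[of x 1] x
      by simp_all
    then have "0 \<le> f_delta \<delta> 0 x" "x \<le> f_delta \<delta> x 1"
      using f_delta_eq[of 0 x] f_delta_eq[of x 1] x by (simp_all add: field_simps)
    then show "extremal_copula 0 x = 0" "extremal_copula x 1 = x"
      using extremal_copula_above[of 0 x] extremal_copula_above[of x 1] x
      by (simp_all only: atLeastAtMost_iff min.absorb1)
  qed
next
  fix a b c d :: real
  assume "a \<in> {0..1}" "b \<in> {0..1}" "c \<in> {0..1}" "d \<in> {0..1}" "a \<le> b" "c \<le> d"
  then show "0 \<le> rect_volume extremal_copula a b c d"
  proof (rule rect_volume_nonneg_of_cells[rotated])
    fix u1 u2 v1 v2 :: real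
    assume bounds: "0 \<le> u1" "u1 \<le> u2" "u2 \<le> 1" "0 \<le> v1" "v1 \<le> v2" "v2 \<le> 1"
      and "u2 \<le> v1 \<or> v2 \<le> u1 \<or> (u1 = v1 \<and> u2 = v2)"
    then consider "u2 \<le> v1" | "v2 \<le> u1" | "u1 = v1" "u2 = v2" by blast
    then show "0 \<le> rect_volume extremal_copula u1 u2 v1 v2"
    proof cases
      case 1
      then show ?thesis using bounds by (intro rect_volume_extremal_copula_above)
    next
      case 2
      then show ?thesis using bounds by (intro rect_volume_extremal_copula_below)
    next
      case 3
      then show ?thesis using bounds rect_volume_extremal_copula_diagonal[of u1 u2] by simp
    qed
  qed
qed

subsection \<open>Maximising the bound\<close>

lemma closed_Df: "closed (Df \<delta>)"
proof -
  have "{(x, x) | x. x \<in> {0..1::real}} = (\<lambda>x. (x, x)) ` {0..1}" by auto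
  moreover have "compact ((\<lambda>x::real. (x, x)) ` {0..1})"
    by (intro compact_continuous_image continuous_intros compact_Icc)
  ultimately show ?thesis
    unfolding Df_def by (auto intro: compact_imp_closed)
qed

lemma Df_subset: "Df \<delta> \<subseteq> {(x, y). x \<in> {0..1} \<and> y \<in> {0..1} \<and> (y \<le> x \<or> f_delta \<delta> x y \<le> x)}"
proof -
  let ?S = "{(x, y). x \<in> {0..1} \<and> y \<in> {0..1} \<and> (y \<le> x \<or> f_delta \<delta> x y \<le> x)}"
  have "?S = ({0..1} \<times> {0..1} \<inter> {p. snd p \<le> fst p})
      \<union> (triangle \<inter> (\<lambda>p. f_delta \<delta> (fst p) (snd p) - fst p) -` {..0})"
    unfolding triangle_def by auto
  moreover have "closed ({0..1} \<times> {0..1} \<inter> {p :: real \<times> real. snd p \<le> fst p})"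
    by (intro closed_Int closed_Times closed_Collect_le continuous_intros closed_atLeastAtMost)
  moreover have "continuous_on triangle (\<lambda>p. f_delta \<delta> (fst p) (snd p) - fst p)"
    by (intro continuous_on_diff continuous_on_f_delta continuous_on_fst continuous_on_id)
  then have "closed (triangle \<inter> (\<lambda>p. f_delta \<delta> (fst p) (snd p) - fst p) -` {..0})"
    using compact_imp_closed[OF compact_triangle] closed_atMost by (rule continuous_closed_preimage)
  ultimately have "closed ?S" by auto
  moreover have "Df_open \<delta> \<subseteq> ?S" "{(x, x) | x. x \<in> {0..1}} \<subseteq> ?S"
    unfolding Df_open_def by auto
  ultimately show ?thesis
    unfolding Df_def using closure_minimal by blast
qed

lemma gU_greatest:
  assumes "x \<in> {0..1}"
  shows "gU \<delta> x \<in> {0..1}" "(x, gU \<delta> x) \<in> Df \<delta>"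
    and "\<And>y. y \<in> {0..1} \<Longrightarrow> (x, y) \<in> Df \<delta> \<Longrightarrow> y \<le> gU \<delta> x"
proof -
  define S where "S = {y. y \<in> {0..1} \<and> (x, y) \<in> Df \<delta>}"
  have "S = {0..1} \<inter> Pair x -` Df \<delta>" unfolding S_def by auto
  moreover have "closed (Pair x -` Df \<delta>)"
    by (intro closed_vimage continuous_intros closed_Df)
  ultimately have "compact S" by (simp add: compact_Int_closed)
  moreover have "x \<in> S" unfolding S_def Df_def using assms by auto
  ultimately obtain s where s: "s \<in> S" "\<forall>t\<in>S. t \<le> s"
    using compact_attains_sup[of S] by auto
  have "gU \<delta> x = s"
    unfolding gU_def by (rule Greatest_equality) (use s in \<open>auto simp: S_def\<close>)
  then show "gU \<delta> x \<in> {0..1}" "(x, gU \<delta> x) \<in> Df \<delta>"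
    and "\<And>y. y \<in> {0..1} \<Longrightarrow> (x, y) \<in> Df \<delta> \<Longrightarrow> y \<le> gU \<delta> x"
    using s unfolding S_def by auto
qed

lemma gU_ge: "x \<in> {0..1} \<Longrightarrow> x \<le> gU \<delta> x"
  using gU_greatest(3)[of x x] unfolding Df_def by auto

text \<open>If \<open>f(x, g\<^sub>U(x)) < x\<close>, then \<open>f(x, y) < x\<close> slightly to the right of \<open>g\<^sub>U(x)\<close> since \<open>f(x, \<cdot>)\<close>
  is Lipschitz, and \<open>g\<^sub>U(x) < 1\<close> since \<open>f(x, 1) \<ge> x\<close>.\<close>

lemma f_delta_gU:
  assumes x: "x \<in> {0..1}"
  shows "f_delta \<delta> x (gU \<delta> x) = x"
proof (rule antisym)
  let ?Y = "gU \<delta> x"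
  have Y: "x \<le> ?Y" "?Y \<le> 1" using gU_ge[OF x] gU_greatest(1)[OF x] by auto
  have "?Y \<le> x \<or> f_delta \<delta> x ?Y \<le> x"
    using Df_subset gU_greatest(2)[OF x] by auto
  then show "f_delta \<delta> x ?Y \<le> x"
    using Y f_delta_diag[of x] dhat_nonneg[OF x] by auto
  show "x \<le> f_delta \<delta> x ?Y"
  proof (rule ccontr)
    assume "\<not> x \<le> f_delta \<delta> x ?Y"
    then have e: "0 < x - f_delta \<delta> x ?Y" by simp
    have "x \<le> f_delta \<delta> x 1"
      using f_delta_eq[of x 1] dvar_increment_le[of x 1] dhat_increment[of x 1] x
      by (simp add: field_simps)
    then have "?Y < 1" using e Y by (cases "?Y = 1") auto
    define \<epsilon> where "\<epsilon> = (x - f_delta \<delta> x ?Y) / 4"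
    define s where "s = min 1 (?Y + \<epsilon>)"
    have "0 < \<epsilon>" using e unfolding \<epsilon>_def by simp
    then have s: "?Y < s" "s \<le> 1" "s - ?Y \<le> \<epsilon>"
      unfolding s_def using \<open>?Y < 1\<close> by auto
    have "f_delta \<delta> x s < x"
      using f_delta_mono_right(2)[of x ?Y s] Y s x e unfolding \<epsilon>_def by auto
    then have "(x, s) \<in> Df \<delta>"
      using closure_subset[of "Df_open \<delta>"] Y s x unfolding Df_def Df_open_def by auto
    then show False
      using gU_greatest(3)[OF x, of s] s Y x by auto
  qed
qed

lemma f_delta_plus_dmin_mono:
  assumes "0 \<le> x" "x \<le> y" "y \<le> y'" "y' \<le> 1"
  shows "f_delta \<delta> x y + dmin x y \<le> f_delta \<delta> x y' + dmin x y'"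
proof (cases "dmin x y \<le> dmin y y'")
  case True
  then show ?thesis
    using dmin_split[OF assms] f_delta_mono_right(1)[OF assms] by simp
next
  case False
  have "dhat y + dhat y' - (y' - y) \<le> 2 * dmin y y'"
  proof -
    have "(dhat y + dhat y' - (y' - y)) / 2 \<le> dmin y y'"
    proof (rule le_dmin)
      fix t assume t: "t \<in> {y..y'}"
      then have "\<bar>dhat t - dhat y\<bar> \<le> t - y" "\<bar>dhat y' - dhat t\<bar> \<le> y' - t"
        using dhat_increment assms by auto
      then show "(dhat y + dhat y' - (y' - y)) / 2 \<le> dhat t"
        by (simp add: abs_le_iff field_simps)
    qed (fact assms)
    then show ?thesis by simp
  qed
  moreover have "dmin x y \<le> dhat y" using dmin_le[of x y y] assms by simp
  moreover have "2 * (f_delta \<delta> x y' - f_delta \<delta> x y) = 2 * (y' - y) - (dhat y' - dhat y) - (dvar y' - dvar y)"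
    using f_delta_eq[of x y] f_delta_eq[of x y'] assms by (simp add: field_simps)
  moreover have "dvar y' - dvar y \<le> y' - y" using dvar_increment_le assms by simp
  ultimately show ?thesis
    using dmin_split[OF assms] False by simp
qed

lemma asym_bound_le_dmin_gU:
  assumes "0 \<le> x" "x \<le> y" "y \<le> 1"
  shows "asym_bound x y \<le> dmin x (gU \<delta> x)"
proof -
  let ?Y = "gU \<delta> x"
  have x: "x \<in> {0..1}" using assms by simp
  have Y: "x \<le> ?Y" "?Y \<le> 1" using gU_ge[OF x] gU_greatest(1)[OF x] by auto
  show ?thesis
  proof (cases "y \<le> ?Y")
    case True
    have "asym_bound x y \<le> f_delta \<delta> x y - x + dmin x y" unfolding asym_bound_def by simp
    also have "\<dots> \<le> f_delta \<delta> x ?Y - x + dmin x ?Y"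
      using f_delta_plus_dmin_mono[of x y ?Y] assms True Y by simp
    finally show ?thesis using f_delta_gU[OF x] by simp
  next
    case False
    have "asym_bound x y \<le> dmin x y" unfolding asym_bound_def by simp
    also have "\<dots> \<le> dmin x ?Y" using dmin_split[of x ?Y y] assms Y False by simp
    finally show ?thesis .
  qed
qed

lemma asym_bound_gU: "x \<in> {0..1} \<Longrightarrow> asym_bound x (gU \<delta> x) = dmin x (gU \<delta> x)"
  using f_delta_gU unfolding asym_bound_def by simp

lemma continuous_on_asym_bound: "continuous_on triangle (\<lambda>p. asym_bound (fst p) (snd p))"
  unfolding asym_bound_def
  by (intro continuous_on_add continuous_on_min continuous_on_const continuous_on_diff
      continuous_on_f_delta continuous_on_dmin continuous_on_fst continuous_on_id)

lemma asym_bound_attains_max: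
  obtains x0 y0 where "(x0, y0) \<in> triangle"
    "\<And>x y. (x, y) \<in> triangle \<Longrightarrow> asym_bound x y \<le> asym_bound x0 y0"
proof -
  have "(0, 0) \<in> triangle" unfolding triangle_def by simp
  then obtain p where p: "p \<in> triangle"
    "\<And>q. q \<in> triangle \<Longrightarrow> asym_bound (fst q) (snd q) \<le> asym_bound (fst p) (snd p)"
    using continuous_attains_sup[OF compact_triangle _ continuous_on_asym_bound] by blast
  show ?thesis
  proof (rule that[of "fst p" "snd p"])
    show "(fst p, snd p) \<in> triangle" using p(1) by simp
    show "asym_bound x y \<le> asym_bound (fst p) (snd p)" if "(x, y) \<in> triangle" for x y
      using p(2)[OF that] by simp
  qed
qed

lemma mu_delta_eq_max_asym_bound:
  assumes max: "(x0, y0) \<in> triangle" "\<And>x y. (x, y) \<in> triangle \<Longrightarrow> asym_bound x y \<le> asym_bound x0 y0"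
  shows "mu_delta \<delta> = asym_bound x0 y0"
proof -
  let ?M = "asym_bound x0 y0"
  have bound: "\<bar>C x y - C y x\<bar> \<le> ?M"
    if "is_copula C" "\<forall>t\<in>{0..1}. C t t = \<delta> t" "x \<in> {0..1}" "y \<in> {0..1}" for C x y
    using copula_abs_asym_le[OF that(1,2) _ that(3,4)] max(2) unfolding triangle_def by auto
  have K: "is_copula extremal_copula" "\<forall>t\<in>{0..1}. extremal_copula t t = \<delta> t"
    using extremal_copula_is_copula extremal_copula_diag by auto
  have x0y0: "x0 \<in> {0..1}" "y0 \<in> {0..1}" "0 \<le> x0" "x0 \<le> y0" "y0 \<le> 1"
    using max(1) unfolding triangle_def by auto
  have "\<bar>extremal_copula x0 y0 - extremal_copula y0 x0\<bar> \<le> asym extremal_copula"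
    by (rule abs_le_asym[where M = ?M]) (use bound[OF K] x0y0 in auto)
  then have "?M \<le> asym extremal_copula"
    using asym_extremal_copula[OF x0y0(3-5)] by simp
  define A where "A = {asym C | C. is_copula C \<and> (\<forall>t\<in>{0..1}. C t t = \<delta> t)}"
  have K_in_A: "asym extremal_copula \<in> A" unfolding A_def using K by blast
  have A_le: "a \<le> ?M" if "a \<in> A" for a
    using that bound unfolding A_def by (auto intro: asym_le)
  have "Sup A \<le> ?M"
    using K_in_A A_le by (intro cSup_least) auto
  moreover have "asym extremal_copula \<le> Sup A"
    using K_in_A A_le by (intro cSup_upper bdd_aboveI)
  ultimately show ?thesis
    unfolding mu_delta_def A_def[symmetric] using \<open>?M \<le> asym extremal_copula\<close> by simp
qed

end

theorem theorem4p6: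
  fixes \<delta> :: "real \<Rightarrow> real"
  assumes "is_diagonal \<delta>"
  shows "\<exists>x0\<in>{0..1}.
           (\<forall>x\<in>{0..1}. Inf (delta_hat \<delta> ` {x..gU \<delta> x}) \<le> Inf (delta_hat \<delta> ` {x0..gU \<delta> x0})) \<and>
           mu_delta \<delta> = Inf (delta_hat \<delta> ` {x0..gU \<delta> x0})"
proof -
  interpret diagonal_section \<delta> by unfold_locales fact
  obtain x0 y0 where max: "(x0, y0) \<in> triangle"
    "\<And>x y. (x, y) \<in> triangle \<Longrightarrow> asym_bound x y \<le> asym_bound x0 y0"
    using asym_bound_attains_max by blast
  have x0: "x0 \<in> {0..1}" "0 \<le> x0" "x0 \<le> y0" "y0 \<le> 1"
    using max(1) unfolding triangle_def by auto
  have le_max: "dmin x (gU \<delta> x) \<le> asym_bound x0 y0" if "x \<in> {0..1}" for x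
    using asym_bound_gU[OF that] max(2)[of x "gU \<delta> x"] gU_ge[OF that] gU_greatest(1)[OF that] that
    unfolding triangle_def by auto
  have "dmin x0 (gU \<delta> x0) = asym_bound x0 y0"
    using le_max[OF x0(1)] asym_bound_le_dmin_gU[OF x0(2-4)] by simp
  then show ?thesis
    using le_max mu_delta_eq_max_asym_bound[OF max] x0(1) by (intro bexI[of _ x0]) auto
qed

end
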